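(* Let $(X,\mathcal{B},\mu,f)$ be a measure preserving system and $\{E_{\rho_n}\}_{n\ge1}$ a sequence of measurable subsets of $X$; put $E^k_{\rho_n}=f^{-k}E_{\rho_n}$. Fix $r\in\mathbb{Z}_+$ and let $H_r=\bigcap_{m\ge1}\bigcup_{n\ge m}\{x:\#\{1\le k\le n:x\in E^k_{\rho_n}\}\ge r\}$. If $E_{\rho_{n_1}}\subset E_{\rho_{n_2}}$ whenever $n_1\ge n_2$, and $\lim_{n\to\infty}\mu(E_{\rho_n})=0$, then $\mu(H_r\,\Delta\, f^{-1}H_r)=0$. *)

theory Defs
  imports "HOL-Probability.Probability"
begin

definition mps :: "'a measure \<Rightarrow> ('a \<Rightarrow> 'a) \<Rightarrow> bool" where
  "mps M f \<longleftrightarrow> prob_space M \<and> f \<in> M \<rightarrow>\<^sub>M M \<and>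
     (\<forall>A \<in> sets M. emeasure M (f -` A \<inter> space M) = emeasure M A)"

definition hit_set :: "'a measure \<Rightarrow> ('a \<Rightarrow> 'a) \<Rightarrow> (nat \<Rightarrow> 'a set) \<Rightarrow> nat \<Rightarrow> nat \<Rightarrow> 'a set" where
  "hit_set M f E n k = (f ^^ k) -` (E n) \<inter> space M"

definition H_set :: "'a measure \<Rightarrow> ('a \<Rightarrow> 'a) \<Rightarrow> (nat \<Rightarrow> 'a set) \<Rightarrow> nat \<Rightarrow> 'a set" where
  "H_set M f E r = (\<Inter>m\<in>{1..}. \<Union>n\<in>{m..}.
      {x \<in> space M. card {k \<in> {1..n}. x \<in> hit_set M f E n k} \<ge> r})"

end

theory Submission
  imports Defs
begin

(* Let N be the intersection of all E n; it is null because the measures of E n tend to 0.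
   If x is in H but f x is not, then f x is in N: otherwise f x misses E n for all large n,
   and then every visit of the orbit of x to E n at a time k >= 2 is a visit of the orbit
   of f x at time k - 1, so f x would be counted at least r times whenever x is, and f x
   would lie in H.  Hence H - f^-1 H is null, and since f^-1 H and H have equal measure,
   so is f^-1 H - H. *)

definition hit_count :: "'a measure \<Rightarrow> ('a \<Rightarrow> 'a) \<Rightarrow> (nat \<Rightarrow> 'a set) \<Rightarrow> nat \<Rightarrow> 'a \<Rightarrow> nat" where
  "hit_count M f E n x = card {k \<in> {1..n}. x \<in> hit_set M f E n k}"

lemma H_set_hit_count:
  "H_set M f E r = (\<Inter>m\<in>{1..}. \<Union>n\<in>{m..}. {x \<in> space M. r \<le> hit_count M f E n x})"
  by (simp add: H_set_def hit_count_def)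

lemma sets_card_ge:
  assumes "finite K" and "\<And>k. k \<in> K \<Longrightarrow> A k \<in> sets M"
  shows "{x \<in> space M. r \<le> card {k \<in> K. x \<in> A k}} \<in> sets M"
proof -
  have "{x \<in> space M. r \<le> card {k \<in> K. x \<in> A k}} =
      (\<Union>T\<in>{T. T \<subseteq> K \<and> r \<le> card T}. {x \<in> space M. {k \<in> K. x \<in> A k} = T})"
    by auto
  also have "\<dots> \<in> sets M"
  proof (rule sets.finite_UN)
    show "finite {T. T \<subseteq> K \<and> r \<le> card T}"
      using assms(1) by simp
    fix T assume "T \<in> {T. T \<subseteq> K \<and> r \<le> card T}"
    then have "{x \<in> space M. {k \<in> K. x \<in> A k} = T} = {x \<in> space M. \<forall>k\<in>K. x \<in> A k \<longleftrightarrow> k \<in> T}"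
      by auto
    also have "\<dots> \<in> sets M"
      using assms by (intro sets.sets_Collect_finite_All) (auto simp: iff_conv_conj_imp)
    finally show "{x \<in> space M. {k \<in> K. x \<in> A k} = T} \<in> sets M" .
  qed
  finally show ?thesis .
qed

lemma sets_H_set:
  assumes f: "f \<in> M \<rightarrow>\<^sub>M M" and E: "\<And>n. n \<ge> 1 \<Longrightarrow> E n \<in> sets M"
  shows "H_set M f E r \<in> sets M"
proof -
  have "hit_set M f E n k \<in> sets M" if "n \<ge> 1" for n k
    unfolding hit_set_def using measurable_sets[OF measurable_compose_n[OF f] E[OF that]] .
  then have "{x \<in> space M. r \<le> hit_count M f E n x} \<in> sets M" if "n \<ge> 1" for n
    unfolding hit_count_def using that by (intro sets_card_ge) auto
  then show ?thesis
    unfolding H_set_hit_count by (intro sets.countable_INT' sets.countable_UN') auto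
qed

lemma card_funpow_hits_le_shift:
  assumes "f x \<notin> B"
  shows "card {k \<in> {1..n}. (f ^^ k) x \<in> B} \<le> card {k \<in> {1..n}. (f ^^ k) (f x) \<in> B}"
proof -
  have "{k \<in> {1..n}. (f ^^ k) x \<in> B} \<subseteq> Suc ` {k \<in> {1..n}. (f ^^ k) (f x) \<in> B}"
  proof
    fix k assume k: "k \<in> {k \<in> {1..n}. (f ^^ k) x \<in> B}"
    with assms have "k \<noteq> 1" by auto
    with k obtain j where j: "k = Suc j" "j \<ge> 1"
      by (cases k) auto
    have "(f ^^ k) x = (f ^^ j) (f x)"
      unfolding j(1) funpow_Suc_right by simp
    with k j show "k \<in> Suc ` {k \<in> {1..n}. (f ^^ k) (f x) \<in> B}"
      by auto
  qed
  then have "card {k \<in> {1..n}. (f ^^ k) x \<in> B} \<le> card (Suc ` {k \<in> {1..n}. (f ^^ k) (f x) \<in> B})"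
    by (intro card_mono) auto
  also have "\<dots> \<le> card {k \<in> {1..n}. (f ^^ k) (f x) \<in> B}"
    by (rule card_image_le) auto
  finally show ?thesis .
qed

lemma hit_count_eq:
  "x \<in> space M \<Longrightarrow> hit_count M f E n x = card {k \<in> {1..n}. (f ^^ k) x \<in> E n}"
  by (simp add: hit_count_def hit_set_def)

lemma hit_count_le_shift:
  assumes "x \<in> space M" and "f x \<in> space M" and "f x \<notin> E n"
  shows "hit_count M f E n x \<le> hit_count M f E n (f x)"
  using card_funpow_hits_le_shift[of f x "E n" n] assms by (simp add: hit_count_eq)

lemma H_set_Diff_preimage_subset:
  assumes f_space: "\<And>x. x \<in> space M \<Longrightarrow> f x \<in> space M"
    and E_antimono: "\<And>n1 n2. 1 \<le> n2 \<Longrightarrow> n2 \<le> n1 \<Longrightarrow> E n1 \<subseteq> E n2"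
  shows "H_set M f E r - (f -` H_set M f E r \<inter> space M) \<subseteq> f -` (\<Inter>n\<in>{1..}. E n) \<inter> space M"
proof
  fix x assume "x \<in> H_set M f E r - (f -` H_set M f E r \<inter> space M)"
  then have x: "x \<in> space M" "x \<in> H_set M f E r" and fx: "f x \<in> space M" "f x \<notin> H_set M f E r"
    using f_space by (auto simp: H_set_def)
  show "x \<in> f -` (\<Inter>n\<in>{1..}. E n) \<inter> space M"
  proof (rule ccontr)
    assume "x \<notin> f -` (\<Inter>n\<in>{1..}. E n) \<inter> space M"
    with x obtain n0 where n0: "n0 \<ge> 1" "f x \<notin> E n0"
      by auto
    from fx obtain m0 where m0: "m0 \<ge> 1" "\<And>n. n \<ge> m0 \<Longrightarrow> hit_count M f E n (f x) < r"
      unfolding H_set_hit_count by (auto simp: not_le)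
    from x(2) obtain n where n: "n \<ge> max n0 m0" "r \<le> hit_count M f E n x"
      unfolding H_set_hit_count using m0(1) by (auto dest!: bspec[of _ _ "max n0 m0"])
    have "hit_count M f E n x \<le> hit_count M f E n (f x)"
      by (rule hit_count_le_shift) (use x fx n0 n(1) E_antimono[of n0 n] in auto)
    with n m0(2)[of n] show False
      by simp
  qed
qed

lemma (in finite_measure) null_sets_INT_measure_tendsto_zero:
  assumes E: "\<And>n. n \<ge> 1 \<Longrightarrow> E n \<in> sets M" and lim: "(\<lambda>n. measure M (E n)) \<longlonglongrightarrow> 0"
  shows "(\<Inter>n\<in>{1..}. E n) \<in> null_sets M"
proof -
  have sets_INT: "(\<Inter>n\<in>{1..}. E n) \<in> sets M"
    using E by (intro sets.countable_INT') auto
  have "\<forall>\<^sub>F n in sequentially. measure M (\<Inter>n\<in>{1..}. E n) \<le> measure M (E n)"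
    unfolding eventually_sequentially using E by (auto intro!: finite_measure_mono)
  then have "measure M (\<Inter>n\<in>{1..}. E n) \<le> 0"
    using lim by (intro tendsto_lowerbound) auto
  then show ?thesis
    using sets_INT by (auto intro!: null_setsI simp: emeasure_eq_measure measure_le_0_iff)
qed

lemma (in finite_measure) null_sets_Diff_swap:
  assumes "A \<in> sets M" "B \<in> sets M" "measure M A = measure M B" "A - B \<in> null_sets M"
  shows "B - A \<in> null_sets M"
proof -
  have "measure M (B - A) = measure M (A - B)"
    using assms(1-3) finite_measure_Diff'[of A B] finite_measure_Diff'[of B A]
    by (simp add: Int_commute)
  also have "\<dots> = 0"
    using assms(4) by (rule measure_eq_0_null_sets)
  finally show ?thesis
    using assms(1,2) by (auto intro!: null_setsI simp: emeasure_eq_measure)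
qed

theorem proposition2p10:
  fixes M :: "'a measure" and f :: "'a \<Rightarrow> 'a" and E :: "nat \<Rightarrow> 'a set" and r :: nat
  assumes "mps M f"
    and "\<And>n. n \<ge> 1 \<Longrightarrow> E n \<in> sets M"
    and "r \<ge> 1"
    and "\<And>n1 n2. 1 \<le> n2 \<Longrightarrow> n2 \<le> n1 \<Longrightarrow> E n1 \<subseteq> E n2"
    and "(\<lambda>n. measure M (E n)) \<longlonglongrightarrow> 0"
  shows "measure M ((H_set M f E r - (f -` H_set M f E r \<inter> space M))
            \<union> ((f -` H_set M f E r \<inter> space M) - H_set M f E r)) = 0"
proof -
  interpret prob_space M
    using assms(1) by (simp add: mps_def)
  have f: "f \<in> M \<rightarrow>\<^sub>M M"
    and preserving: "\<And>A. A \<in> sets M \<Longrightarrow> measure M (f -` A \<inter> space M) = measure M A"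
    using assms(1) by (auto simp: mps_def measure_def)
  define H where "H = H_set M f E r"
  define N where "N = (\<Inter>n\<in>{1..}. E n)"
  have H: "H \<in> sets M" "f -` H \<inter> space M \<in> sets M"
    unfolding H_def using sets_H_set[OF f assms(2)] f by auto
  have N: "N \<in> null_sets M"
    unfolding N_def using assms(2,5) by (rule null_sets_INT_measure_tendsto_zero)
  then have "measure M (f -` N \<inter> space M) = 0"
    using preserving[OF null_setsD2[OF N]] measure_eq_0_null_sets[OF N] by simp
  then have preimage_N: "f -` N \<inter> space M \<in> null_sets M"
    using f N by (auto intro!: null_setsI measurable_sets simp: emeasure_eq_measure)
  have "H - (f -` H \<inter> space M) \<subseteq> f -` N \<inter> space M"
    unfolding H_def N_def using measurable_space[OF f] assms(4) by (rule H_set_Diff_preimage_subset)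
  then have forward: "H - (f -` H \<inter> space M) \<in> null_sets M"
    using H by (intro null_sets_subset[OF preimage_N]) auto
  have backward: "(f -` H \<inter> space M) - H \<in> null_sets M"
    using H(1,2) preserving[OF H(1), symmetric] forward by (rule null_sets_Diff_swap)
  show ?thesis
    using null_sets.Un[OF forward backward] unfolding H_def by (rule measure_eq_0_null_sets)
qed

end
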